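(* Let $\ell\ge1$ be an integer and $S_1,\dots,S_m$ site states. For $n$ sufficiently large, let $S=S_1\otimes\cdots\otimes S_m\otimes V^{\otimes n}$. If the carrier $u_\ell=(\ell,0,0)$ is passed successively through $S_1,\dots,S_m$ and then the $n$ vacuum sites, each step applying the map $R$, then the final carrier state is again $u_\ell$; i.e. $u_\ell\otimes S\simeq S'\otimes u_\ell$ under repeated application of $R$, for some $S'$.
   Context: A site state is a triple $(d,e,f)$ of nonnegative integers with $d=e-f+1$; $V=(1,0,0)$. Carrier states are triples $(a,b,c)$ of nonnegative integers. The map $R$ sends a carrier $(a,b,c)$ and a site $(d,e,f)$ to a site $(d',e',f')$ and a carrier $(a',b',c')$ with $d'=d+\min(a+b,a+c,b+f)-\min(e+c,d+c,d+b)$, $e'=e+\min(a+b,a+c,b+f)-\min(a+e,d+f,e+f)$, $f'=f+\min(e+c,d+c,d+b)-\min(a+e,d+f,e+f)$, $a'=a-\min(a+b,a+c,b+f)+\min(e+c,d+c,d+b)$, $b'=b-\min(a+b,a+c,b+f)+\min(a+e,d+f,e+f)$, $c'=c-\min(e+c,d+c,d+b)+\min(a+e,d+f,e+f)$. (This $R$ is the tropicalization of a three-wire whurl relation; it preserves $a-b+c$ and $d-e+f$.) The notation $X\otimes S_1\otimes\cdots\otimes S_k\simeq S_1'\otimes\cdots\otimes S_k'\otimes X'$ means that passing carrier $X$ through $S_1,\dots,S_k$ in order via $R$ produces sites $S_j'$ and final carrier $X'$. *)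

theory Defs
  imports Main
begin

type_synonym triple = "int \<times> int \<times> int"

definition R :: "triple \<Rightarrow> triple \<Rightarrow> triple \<times> triple" where
  "R X S = (case X of (a,b,c) \<Rightarrow> case S of (d,e,f) \<Rightarrow>
     (let p = min (min (a+b) (a+c)) (b+f);
          q = min (min (e+c) (d+c)) (d+b);
          r = min (min (a+e) (d+f)) (e+f)
      in ((d + p - q, e + p - r, f + q - r), (a - p + q, b - p + r, c - q + r))))"

definition is_site :: "triple \<Rightarrow> bool" where
  "is_site S = (case S of (d,e,f) \<Rightarrow> d \<ge> 0 \<and> e \<ge> 0 \<and> f \<ge> 0 \<and> d = e - f + 1)"

definition vac :: triple where "vac = (1,0,0)"

fun pass :: "triple \<Rightarrow> triple list \<Rightarrow> triple list \<times> triple" where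
  "pass X [] = ([], X)"
| "pass X (S # Ss) = (let (S', X') = R X S; (Ss', X'') = pass X' Ss in (S' # Ss', X''))"

end

theory Submission
  imports Defs
begin

(* Call a - b + c the charge of a carrier (a,b,c) and b + c its excess.
   The carrier part of R conserves the charge for all inputs, and it keeps carriers
   nonnegative as long as the sites have nonnegative entries.  Hence after passing
   u_l = (l,0,0) through S_1,...,S_m we hold a nonnegative carrier of charge l.
   On a vacuum site V, a nonnegative carrier of charge at least 1 either has excess 0,
   in which case it equals (l,0,0) and is left unchanged, or its excess drops by at
   least one.  So after at least (excess) vacuum sites the carrier is u_l again, and it
   stays there. *)

lemma le_min3_iff: "t \<le> min (min x y) (z::int) \<longleftrightarrow> t \<le> x \<and> t \<le> y \<and> t \<le> z"
  by auto

lemma R_carrier: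
  "snd (R (a,b,c) (d,e,f)) =
     (let p = min (min (a+b) (a+c)) (b+f);
          q = min (min (e+c) (d+c)) (d+b);
          r = min (min (a+e) (d+f)) (e+f)
      in (a - p + q, b - p + r, c - q + r))"
  by (simp add: R_def Let_def)

lemma R_conserves_charge:
  assumes "snd (R (a,b,c) S) = (a',b',c')"
  shows "a' - b' + c' = a - b + c"
  using assms by (cases S) (auto simp: R_carrier Let_def)

text \<open>A nonnegative carrier stays nonnegative after a site with nonnegative entries.\<close>
lemma R_carrier_nonneg:
  assumes "0 \<le> a" "0 \<le> b" "0 \<le> c" "0 \<le> d" "0 \<le> e" "0 \<le> f"
    and "snd (R (a,b,c) (d,e,f)) = (a',b',c')"
  shows "0 \<le> a' \<and> 0 \<le> b' \<and> 0 \<le> c'"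
proof -
  define p where "p = min (min (a+b) (a+c)) (b+f)"
  define q where "q = min (min (e+c) (d+c)) (d+b)"
  define r where "r = min (min (a+e) (d+f)) (e+f)"
  have p: "p \<le> a+b" "p \<le> a+c" "p \<le> b+f" unfolding p_def by auto
  have q: "q \<le> e+c" "q \<le> d+c" "q \<le> d+b" unfolding q_def by auto
  have a': "p - a \<le> q" unfolding q_def using p assms by (simp only: le_min3_iff) linarith
  have b': "p - b \<le> r" and c': "q - c \<le> r"
    unfolding r_def using p q assms by (simp only: le_min3_iff; linarith)+
  have "(a',b',c') = (a - p + q, b - p + r, c - q + r)"
    using assms(7) by (simp add: R_carrier Let_def p_def q_def r_def)
  with a' b' c' show ?thesis by auto
qed

lemma pass_Cons_carrier: "snd (pass X (S # Ss)) = snd (pass (snd (R X S)) Ss)"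
  by (simp add: split_def Let_def)

lemma pass_append_carrier: "snd (pass X (xs @ ys)) = snd (pass (snd (pass X xs)) ys)"
  by (induction xs arbitrary: X) (simp_all del: pass.simps(2) add: pass_Cons_carrier)

lemma pass_carrier_nonneg:
  assumes "0 \<le> a" "0 \<le> b" "0 \<le> c" and "\<forall>S\<in>set Ss. is_site S"
    and "snd (pass (a,b,c) Ss) = (a',b',c')"
  shows "0 \<le> a' \<and> 0 \<le> b' \<and> 0 \<le> c' \<and> a' - b' + c' = a - b + c"
  using assms
proof (induction Ss arbitrary: a b c)
  case Nil
  then show ?case by simp
next
  case (Cons S Ss)
  obtain d e f where S: "S = (d,e,f)" and def_nonneg: "0 \<le> d" "0 \<le> e" "0 \<le> f"
    using Cons.prems(4) by (cases S) (auto simp: is_site_def)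
  obtain a1 b1 c1 where step: "snd (R (a,b,c) S) = (a1,b1,c1)"
    by (cases "snd (R (a,b,c) S)") auto
  have "0 \<le> a1 \<and> 0 \<le> b1 \<and> 0 \<le> c1"
    using R_carrier_nonneg Cons.prems(1-3) def_nonneg step S by blast
  moreover have "a1 - b1 + c1 = a - b + c"
    using R_conserves_charge step by blast
  moreover have "snd (pass (a1,b1,c1) Ss) = (a',b',c')"
    using Cons.prems(5) step by (simp only: pass_Cons_carrier)
  ultimately show ?case using Cons.IH Cons.prems(4) by auto
qed

text \<open>On the vacuum site the third minimum vanishes and R becomes explicit.\<close>
lemma R_vac_carrier:
  assumes "0 \<le> a"
  shows "snd (R (a,b,c) vac) =
           (a - min (min (a+b) (a+c)) b + min c (1+b), b - min (min (a+b) (a+c)) b, c - min c (1+b))"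
  using assms by (simp add: R_carrier vac_def Let_def min_def)

lemma R_vac_fixes_u: "0 \<le> l \<Longrightarrow> snd (R (l,0,0) vac) = (l,0,0)"
  by (simp add: R_vac_carrier)

lemma R_vac_decreases_excess:
  assumes "0 \<le> a" "0 \<le> b" "0 \<le> c" "1 \<le> a - b + c" "0 < b + c"
    and "snd (R (a,b,c) vac) = (a',b',c')"
  shows "0 \<le> a' \<and> 0 \<le> b' \<and> 0 \<le> c' \<and> b' + c' < b + c"
proof -
  define p where "p = min (min (a+b) (a+c)) b"
  define q where "q = min c (1+b)"
  have p: "0 \<le> p" "p \<le> b" "p \<le> a + c" "c = 0 \<Longrightarrow> 1 \<le> p"
    unfolding p_def using assms(1-5) by (auto simp: min_def)
  have q: "0 \<le> q" "q \<le> c" "0 < c \<Longrightarrow> 1 \<le> q" "p - a \<le> q"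
    unfolding q_def using p assms(1-3) by (auto simp: min_def)
  have "(a',b',c') = (a - p + q, b - p, c - q)"
    using assms(6) by (simp add: R_vac_carrier[OF assms(1)] p_def q_def)
  with p q show ?thesis by (cases "c = 0") auto
qed

lemma pass_vacuum_absorbs:
  assumes "0 \<le> a" "0 \<le> b" "0 \<le> c" "a - b + c = l" "1 \<le> l" "nat (b + c) \<le> n"
  shows "snd (pass (a,b,c) (replicate n vac)) = (l,0,0)"
  using assms
proof (induction n arbitrary: a b c)
  case 0
  then show ?case by simp
next
  case (Suc n)
  obtain a' b' c' where step: "snd (R (a,b,c) vac) = (a',b',c')"
    by (cases "snd (R (a,b,c) vac)") auto
  have charge: "a' - b' + c' = l"
    using R_conserves_charge step Suc.prems(4) by blast
  have rest: "snd (pass (a,b,c) (replicate (Suc n) vac)) = snd (pass (a',b',c') (replicate n vac))"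
    using step by (simp only: replicate_Suc pass_Cons_carrier)
  show ?case
  proof (cases "b + c = 0")
    case True
    then have "(a,b,c) = (l,0,0)" using Suc.prems(2-4) by auto
    then have "(a',b',c') = (l,0,0)" using step R_vac_fixes_u Suc.prems(5) by simp
    then show ?thesis using rest Suc.IH Suc.prems(5) by simp
  next
    case False
    then have "0 \<le> a' \<and> 0 \<le> b' \<and> 0 \<le> c' \<and> b' + c' < b + c"
      using R_vac_decreases_excess[OF Suc.prems(1-3) _ _ step] Suc.prems(2-5) by simp
    moreover have "nat (b' + c') \<le> n" using calculation Suc.prems(6) by linarith
    ultimately show ?thesis using rest Suc.IH charge Suc.prems(5) by simp
  qed
qed

theorem mainTheorem7:
  fixes l :: int and Ss :: "triple list"
  assumes "l \<ge> 1" and "\<forall>S\<in>set Ss. is_site S"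
  shows "\<exists>N. \<forall>n\<ge>N. snd (pass (l,0,0) (Ss @ replicate n vac)) = (l,0,0)"
proof -
  obtain a b c where X: "snd (pass (l,0,0) Ss) = (a,b,c)"
    by (cases "snd (pass (l,0,0) Ss)") auto
  have "0 \<le> a \<and> 0 \<le> b \<and> 0 \<le> c \<and> a - b + c = l"
    using pass_carrier_nonneg[OF _ _ _ assms(2) X] assms(1) by simp
  then have "\<forall>n\<ge>nat (b + c). snd (pass (l,0,0) (Ss @ replicate n vac)) = (l,0,0)"
    using pass_vacuum_absorbs assms(1) X by (simp add: pass_append_carrier)
  then show ?thesis by blast
qed

end
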